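(* Let $X,Z$ be complex Banach spaces, $E\in L(X,Z)$, $A\colon\mathrm{dom}(A)\subseteq X\to Z$ closed and densely defined, and assume $(E,A)$ has a complex resolvent index $p_{\mathrm{res}}^{(E,A)}$; set $p:=p_{\mathrm{res}}^{(E,A)}+1$. Fix $\mu\in\rho(E,A)$ and let $X_{\ker}:=\ker R_r(\mu)^p$, $Z_{\ker}:=\ker R_l(\mu)^p$. Then the operator $A_{\ker}\colon\mathrm{dom}(A_{\ker})\subseteq X_{\ker}\to Z_{\ker}$, $x\mapsto Ax$, with $\mathrm{dom}(A_{\ker}):=\mathrm{dom}(A)\cap X_{\ker}$, is well defined and has a bounded inverse $A_{\ker}^{-1}\colon Z_{\ker}\to X_{\ker}$. Furthermore, with $E_{\ker}:=E|_{X_{\ker}}\in L(X_{\ker},Z_{\ker})$, the operators $E_{\ker}A_{\ker}^{-1}\in L(Z_{\ker})$ and $A_{\ker}^{-1}E_{\ker}\in L(X_{\ker})$ are nilpotent of degree not exceeding $p$.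
   Context: $\rho(E,A)$ is the set of $\lambda\in\mathbb C$ for which $\lambda E-A\colon\mathrm{dom}(A)\to Z$ is bijective with bounded inverse. $(E,A)$ has a complex resolvent index if there is a smallest $p_{\mathrm{res}}^{(E,A)}\in\mathbb N_0$ for which there exist $\omega\in\mathbb R$, $C>0$ with $\{\operatorname{Re}\lambda>\omega\}\subseteq\rho(E,A)$ and $\|(\lambda E-A)^{-1}\|\le C|\lambda|^{p_{\mathrm{res}}^{(E,A)}-1}$ for $\operatorname{Re}\lambda>\omega$. $R_r(\lambda):=(\lambda E-A)^{-1}E\in L(X)$, $R_l(\lambda):=E(\lambda E-A)^{-1}\in L(Z)$. *)

theory Defs
  imports "HOL-Analysis.Analysis"
begin

text \<open>The distribution has no complex vector space hierarchy, so a complex Banach space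
is a real Banach space with a compatible complex scalar multiplication.\<close>

class complex_scale =
  fixes scaleC :: "complex \<Rightarrow> 'a \<Rightarrow> 'a" (infixr \<open>*\<^sub>C\<close> 75)

class complex_banach = banach + complex_scale +
  assumes scaleC_add_right: "c *\<^sub>C (x + y) = c *\<^sub>C x + c *\<^sub>C y"
    and scaleC_add_left: "(a + b) *\<^sub>C x = a *\<^sub>C x + b *\<^sub>C x"
    and scaleC_scaleC: "a *\<^sub>C (b *\<^sub>C x) = (a * b) *\<^sub>C x"
    and scaleC_one: "1 *\<^sub>C x = x"
    and scaleR_scaleC: "scaleR r x = complex_of_real r *\<^sub>C x"
    and norm_scaleC: "norm (c *\<^sub>C x) = cmod c * norm x"

definition bounded_clinear :: "('x::complex_banach \<Rightarrow> 'z::complex_banach) \<Rightarrow> bool" where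
  "bounded_clinear f \<longleftrightarrow> bounded_linear f \<and> (\<forall>c x. f (c *\<^sub>C x) = c *\<^sub>C f x)"

definition csubspace :: "'x::complex_banach set \<Rightarrow> bool" where
  "csubspace S \<longleftrightarrow> 0 \<in> S \<and> (\<forall>x\<in>S. \<forall>y\<in>S. x + y \<in> S) \<and> (\<forall>c. \<forall>x\<in>S. c *\<^sub>C x \<in> S)"

definition closed_operator :: "'x::complex_banach set \<Rightarrow> ('x \<Rightarrow> 'z::complex_banach) \<Rightarrow> bool" where
  "closed_operator D A \<longleftrightarrow> csubspace D
     \<and> (\<forall>x\<in>D. \<forall>y\<in>D. A (x + y) = A x + A y)
     \<and> (\<forall>c. \<forall>x\<in>D. A (c *\<^sub>C x) = c *\<^sub>C A x)
     \<and> closed ((\<lambda>x. (x, A x)) ` D)"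

definition densely_defined :: "'x::complex_banach set \<Rightarrow> bool" where
  "densely_defined D \<longleftrightarrow> closure D = UNIV"

definition pencil :: "('x::complex_banach \<Rightarrow> 'z::complex_banach) \<Rightarrow> ('x \<Rightarrow> 'z) \<Rightarrow> complex \<Rightarrow> 'x \<Rightarrow> 'z" where
  "pencil E A l x = l *\<^sub>C E x - A x"

definition resolvent :: "('x::complex_banach \<Rightarrow> 'z::complex_banach) \<Rightarrow> ('x \<Rightarrow> 'z) \<Rightarrow> 'x set \<Rightarrow> complex \<Rightarrow> 'z \<Rightarrow> 'x" where
  "resolvent E A D l = the_inv_into D (pencil E A l)"

definition res_set :: "('x::complex_banach \<Rightarrow> 'z::complex_banach) \<Rightarrow> ('x \<Rightarrow> 'z) \<Rightarrow> 'x set \<Rightarrow> complex set" where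
  "res_set E A D = {l. bij_betw (pencil E A l) D UNIV
       \<and> (\<exists>K. \<forall>z. norm (resolvent E A D l z) \<le> K * norm z)}"

definition res_growth :: "('x::complex_banach \<Rightarrow> 'z::complex_banach) \<Rightarrow> ('x \<Rightarrow> 'z) \<Rightarrow> 'x set \<Rightarrow> nat \<Rightarrow> bool" where
  "res_growth E A D p \<longleftrightarrow> (\<exists>\<omega>::real. \<exists>C::real. C > 0
      \<and> {l. Re l > \<omega>} \<subseteq> res_set E A D
      \<and> (\<forall>l. Re l > \<omega> \<longrightarrow>
           (\<forall>z. norm (resolvent E A D l z) \<le> C * (cmod l powi (int p - 1)) * norm z)))"

definition has_complex_resolvent_index :: "('x::complex_banach \<Rightarrow> 'z::complex_banach) \<Rightarrow> ('x \<Rightarrow> 'z) \<Rightarrow> 'x set \<Rightarrow> bool" where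
  "has_complex_resolvent_index E A D \<longleftrightarrow> (\<exists>p. res_growth E A D p)"

definition complex_resolvent_index :: "('x::complex_banach \<Rightarrow> 'z::complex_banach) \<Rightarrow> ('x \<Rightarrow> 'z) \<Rightarrow> 'x set \<Rightarrow> nat" where
  "complex_resolvent_index E A D = (LEAST p. res_growth E A D p)"

definition R_r :: "('x::complex_banach \<Rightarrow> 'z::complex_banach) \<Rightarrow> ('x \<Rightarrow> 'z) \<Rightarrow> 'x set \<Rightarrow> complex \<Rightarrow> 'x \<Rightarrow> 'x" where
  "R_r E A D l = resolvent E A D l \<circ> E"

definition R_l :: "('x::complex_banach \<Rightarrow> 'z::complex_banach) \<Rightarrow> ('x \<Rightarrow> 'z) \<Rightarrow> 'x set \<Rightarrow> complex \<Rightarrow> 'z \<Rightarrow> 'z" where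
  "R_l E A D l = E \<circ> resolvent E A D l"

end

theory Submission
  imports Defs "HOL-Real_Asymp.Real_Asymp"
begin

text \<open>Write \<open>R = (\<mu>E - A)^-1\<close>, \<open>S = E R = R_l(\<mu>)\<close>, \<open>T = R E = R_r(\<mu>)\<close>, and let \<open>q\<close> be the
  resolvent index, so \<open>p = q + 1\<close>. If \<open>S^(q+1) z = 0\<close>, iterating the resolvent identity turns
  \<open>(tE - A)^-1 z\<close> into the polynomial \<open>\<Sum>k\<le>q. (\<mu> - t)^k R S^k z\<close> in \<open>t\<close>. It is \<open>O(t^(q-1))\<close>
  for real \<open>t \<rightarrow> \<infinity>\<close>, so its top coefficient \<open>R S^q z\<close> vanishes: \<open>ker S^(q+1) = ker S^q\<close>.
  With \<open>R A = \<mu>T - I\<close> on \<open>dom A\<close> this shows that \<open>A\<close> maps \<open>ker T^p\<close> into \<open>ker S^p\<close>, injectively,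
  as \<open>A x = 0\<close> gives \<open>x = \<mu>T x = \<dots> = \<mu>^p T^p x = 0\<close>. Since \<open>A R = -(I - \<mu>S)\<close>, the inverse on
  \<open>ker S^p\<close> is the terminating Neumann series \<open>-R (\<Sum>k<p. \<mu>^k S^k)\<close>, which is bounded; and
  \<open>E A_ker^-1\<close>, \<open>A_ker^-1 E\<close> become polynomials without constant term in \<open>S\<close> and \<open>T\<close>,
  hence are nilpotent on these kernels.\<close>

interpretation complex_vector: vector_space "scaleC :: complex \<Rightarrow> 'a \<Rightarrow> 'a::complex_banach"
  by unfold_locales (simp_all add: scaleC_add_right scaleC_add_left scaleC_scaleC scaleC_one)

interpretation complex_vector_pair: vector_space_pair
  "scaleC :: complex \<Rightarrow> 'a \<Rightarrow> 'a::complex_banach" "scaleC :: complex \<Rightarrow> 'b \<Rightarrow> 'b::complex_banach"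
  by unfold_locales

abbreviation clinear :: "('a::complex_banach \<Rightarrow> 'b::complex_banach) \<Rightarrow> bool" where
  "clinear \<equiv> Vector_Spaces.linear (*\<^sub>C) (*\<^sub>C)"

lemma clinearI:
  assumes "\<And>x y. f (x + y) = f x + f y" and "\<And>c x. f (c *\<^sub>C x) = c *\<^sub>C f x"
  shows "clinear f"
  using assms by (simp add: Vector_Spaces.linear_iff complex_vector.vector_space_axioms)

lemma clinear_funpow:
  fixes f :: "'a::complex_banach \<Rightarrow> 'a"
  shows "clinear f \<Longrightarrow> clinear (f ^^ n)"
  by (induction n) (simp_all add: complex_vector.linear_id Vector_Spaces.linear_compose)

lemma funpow_eq_0_mono:
  fixes f :: "'a::complex_banach \<Rightarrow> 'a"
  assumes "clinear f" and "(f ^^ m) x = 0" and "m \<le> n"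
  shows "(f ^^ n) x = 0"
proof -
  obtain d where "n = d + m"
    using \<open>m \<le> n\<close> le_add_diff_inverse2 by metis
  then have "(f ^^ n) x = (f ^^ d) ((f ^^ m) x)"
    by (simp add: funpow_add)
  then show ?thesis
    using assms(2) complex_vector_pair.linear_0[OF clinear_funpow[OF assms(1)]] by simp
qed

lemma bounded_linear_scaleC_left: "bounded_linear (\<lambda>c. c *\<^sub>C (x::'a::complex_banach))"
  by (rule bounded_linear_intro[of _ "norm x"])
    (simp_all add: scaleC_add_left scaleR_scaleC scaleC_scaleC norm_scaleC scaleR_conv_of_real)

lemma bounded_linear_scaleC_right: "bounded_linear (\<lambda>x::'a::complex_banach. c *\<^sub>C x)"
  by (rule bounded_linear_intro[of _ "cmod c"])
    (simp_all add: scaleC_add_right scaleR_scaleC scaleC_scaleC norm_scaleC mult.commute)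

lemma bounded_linear_clinear:
  assumes "clinear f" and "\<And>x. norm (f x) \<le> K * norm x"
  shows "bounded_linear f"
proof (rule bounded_linear_intro[of _ K])
  show "f (x + y) = f x + f y" for x y
    using complex_vector_pair.linear_add[OF assms(1)] .
  show "f (r *\<^sub>R x) = r *\<^sub>R f x" for r x
    using complex_vector_pair.linear_scale[OF assms(1)] by (simp add: scaleR_scaleC)
  show "norm (f x) \<le> norm x * K" for x
    using assms(2)[of x] by (simp add: mult.commute)
qed

lemma bounded_linear_funpow:
  fixes f :: "'a::real_normed_vector \<Rightarrow> 'a"
  shows "bounded_linear f \<Longrightarrow> bounded_linear (f ^^ n)"
proof (induction n)
  case 0
  show ?case by (simp add: id_def bounded_linear_ident)
next
  case (Suc n)
  then show ?case by (simp add: comp_def bounded_linear_compose)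
qed

lemma nilpotent_on_funpow_kernel:
  fixes L F :: "'a::complex_banach \<Rightarrow> 'a"
  assumes L: "clinear L"
    and F: "\<And>y. (L ^^ n) y = 0 \<Longrightarrow> F y = (\<Sum>k<n. c k *\<^sub>C (L ^^ Suc k) y)"
    and z: "(L ^^ n) z = 0"
  shows "(F ^^ n) z = 0"
proof -
  have "(L ^^ (n - i)) ((F ^^ i) z) = 0" if "i \<le> n" for i
    using that
  proof (induction i)
    case 0
    then show ?case using z by simp
  next
    case (Suc i)
    define y where "y = (F ^^ i) z"
    have IH: "(L ^^ (n - i)) y = 0"
      using Suc by (simp add: y_def)
    have "(L ^^ n) y = 0"
      using funpow_eq_0_mono[OF L IH] by simp
    then have Fy: "(F ^^ Suc i) z = (\<Sum>k<n. c k *\<^sub>C (L ^^ Suc k) y)"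
      using F by (simp add: y_def)
    have "(L ^^ (n - Suc i)) ((L ^^ Suc k) y) = 0" for k
    proof -
      have "(L ^^ (n - Suc i)) ((L ^^ Suc k) y) = (L ^^ (n - Suc i + Suc k)) y"
        by (simp only: funpow_add comp_apply)
      then show ?thesis
        using funpow_eq_0_mono[OF L IH, of "n - Suc i + Suc k"] Suc.prems by simp
    qed
    then show ?case
      unfolding Fy using clinear_funpow[OF L, of "n - Suc i"]
      by (simp add: complex_vector_pair.linear_sum complex_vector_pair.linear_scale)
  qed
  from this[of n] show ?thesis by simp
qed

lemma top_coefficient_eq_0_if_slow_growth:
  fixes v :: "nat \<Rightarrow> 'a::complex_banach"
  assumes growth: "\<forall>\<^sub>F t in at_top.
    norm (\<Sum>k<Suc q. (\<mu> - of_real t) ^ k *\<^sub>C v k) \<le> C * t powi (int q - 1)"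
  shows "v q = 0"
proof -
  define c :: "nat \<Rightarrow> real \<Rightarrow> complex" where "c k t = (\<mu> - of_real t) ^ k / of_real t ^ q" for k t
  define f where "f t = (\<Sum>k<Suc q. c k t *\<^sub>C v k)" for t
  have inverse_to_0: "((\<lambda>t. of_real (1 / t) :: complex) \<longlongrightarrow> 0) at_top"
  proof -
    have "((\<lambda>t::real. 1 / t) \<longlongrightarrow> 0) at_top" by real_asymp
    from tendsto_of_real[OF this, where ?'a=complex] show ?thesis by simp
  qed
  have c_limit: "(c k \<longlongrightarrow> (-1) ^ k * 0 ^ (q - k)) at_top" if "k \<le> q" for k
  proof -
    have "\<forall>\<^sub>F t in at_top. (\<mu> * of_real (1 / t) - 1) ^ k * of_real (1 / t) ^ (q - k) = c k t"
      using eventually_gt_at_top[of 0]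
    proof eventually_elim
      case (elim t)
      have "of_real t ^ q = (of_real t ^ k * of_real t ^ (q - k) :: complex)"
        using \<open>k \<le> q\<close> by (simp flip: power_add)
      then show ?case
        using elim by (simp add: c_def power_divide field_simps)
    qed
    moreover have "((\<lambda>t. (\<mu> * of_real (1 / t) - 1) ^ k * of_real (1 / t) ^ (q - k))
        \<longlongrightarrow> (\<mu> * 0 - 1) ^ k * 0 ^ (q - k)) at_top"
      by (intro tendsto_intros inverse_to_0)
    ultimately show ?thesis
      by (simp add: Lim_transform_eventually)
  qed
  have "(f \<longlongrightarrow> (\<Sum>k<Suc q. ((-1) ^ k * 0 ^ (q - k)) *\<^sub>C v k)) at_top"
    unfolding f_def
    by (intro tendsto_sum bounded_linear.tendsto[OF bounded_linear_scaleC_left] c_limit) simp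
  moreover have "(\<Sum>k<Suc q. ((-1) ^ k * 0 ^ (q - k)) *\<^sub>C v k) = (-1) ^ q *\<^sub>C v q"
    by (simp add: zero_power)
  ultimately have f_limit: "(f \<longlongrightarrow> (-1) ^ q *\<^sub>C v q) at_top"
    by simp
  have "(f \<longlongrightarrow> 0) at_top"
  proof (rule Lim_null_comparison)
    show "((\<lambda>t. C / t) \<longlongrightarrow> 0) at_top" by real_asymp
    show "\<forall>\<^sub>F t in at_top. norm (f t) \<le> C / t"
      using growth eventually_gt_at_top[of 0]
    proof eventually_elim
      case (elim t)
      have "f t = (1 / of_real t ^ q) *\<^sub>C (\<Sum>k<Suc q. (\<mu> - of_real t) ^ k *\<^sub>C v k)"
        unfolding f_def c_def complex_vector.scale_sum_right scaleC_scaleC by simp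
      then have "norm (f t) = norm (\<Sum>k<Suc q. (\<mu> - of_real t) ^ k *\<^sub>C v k) / t ^ q"
        using elim by (simp add: norm_scaleC norm_divide norm_power)
      also have "\<dots> \<le> C * t powi (int q - 1) / t ^ q"
        using elim by (simp add: divide_right_mono)
      also have "\<dots> = C / t"
        using elim by (simp add: power_int_diff)
      finally show ?case .
    qed
  qed
  then have "(-1) ^ q *\<^sub>C v q = 0"
    using tendsto_unique[OF trivial_limit_at_top_linorder f_limit] by blast
  then show ?thesis by simp
qed

locale linear_pencil =
  fixes E :: "'x::complex_banach \<Rightarrow> 'z::complex_banach" and A :: "'x \<Rightarrow> 'z" and D :: "'x set"
  assumes bounded_clinear_E: "bounded_clinear E" and closed_operator_A: "closed_operator D A"
begin

lemma clinear_E: "clinear E"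
  using bounded_clinear_E
  by (intro clinearI) (auto simp: bounded_clinear_def linear_add bounded_linear.linear)

sublocale E: Vector_Spaces.linear "(*\<^sub>C)" "(*\<^sub>C)" E
  by (rule clinear_E)

lemma subspace_D: "complex_vector.subspace D"
  using closed_operator_A
  by (simp add: closed_operator_def csubspace_def complex_vector.subspace_def)

lemma A_add: "x \<in> D \<Longrightarrow> y \<in> D \<Longrightarrow> A (x + y) = A x + A y"
  and A_scaleC: "x \<in> D \<Longrightarrow> A (c *\<^sub>C x) = c *\<^sub>C A x"
  using closed_operator_A by (auto simp: closed_operator_def)

lemma A_diff:
  assumes "x \<in> D" "y \<in> D"
  shows "A (x - y) = A x - A y"
  using A_add[of "x - y" y] assms complex_vector.subspace_diff[OF subspace_D] by simp

lemma A_0: "A 0 = 0"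
  using A_diff[of 0 0] complex_vector.subspace_0[OF subspace_D] by simp

lemma pencil_add: "x \<in> D \<Longrightarrow> y \<in> D \<Longrightarrow> pencil E A l (x + y) = pencil E A l x + pencil E A l y"
  by (simp add: pencil_def A_add E.add scaleC_add_right)

lemma pencil_scaleC: "x \<in> D \<Longrightarrow> pencil E A l (c *\<^sub>C x) = c *\<^sub>C pencil E A l x"
  by (simp add: pencil_def A_scaleC E.scale complex_vector.scale_right_diff_distrib
      scaleC_scaleC mult.commute)

context
  fixes l assumes l: "l \<in> res_set E A D"
begin

lemma bij_betw_pencil: "bij_betw (pencil E A l) D UNIV"
  using l by (simp add: res_set_def)

lemma resolvent_in_D: "resolvent E A D l z \<in> D"
  using bij_betw_pencil by (simp add: resolvent_def bij_betw_def the_inv_into_into)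

lemma pencil_resolvent: "pencil E A l (resolvent E A D l z) = z"
  using bij_betw_pencil by (simp add: resolvent_def bij_betw_def f_the_inv_into_f)

lemma resolvent_pencil: "x \<in> D \<Longrightarrow> resolvent E A D l (pencil E A l x) = x"
  using bij_betw_pencil by (simp add: resolvent_def bij_betw_def the_inv_into_f_f)

lemma clinear_resolvent: "clinear (resolvent E A D l)"
proof (rule clinearI)
  let ?R = "resolvent E A D l"
  fix x y c
  have "pencil E A l (?R x + ?R y) = x + y"
    by (simp add: pencil_add resolvent_in_D pencil_resolvent)
  then show "?R (x + y) = ?R x + ?R y"
    using resolvent_pencil complex_vector.subspace_add[OF subspace_D] resolvent_in_D by metis
  have "pencil E A l (c *\<^sub>C ?R x) = c *\<^sub>C x"
    by (simp add: pencil_scaleC resolvent_in_D pencil_resolvent)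
  then show "?R (c *\<^sub>C x) = c *\<^sub>C ?R x"
    using resolvent_pencil complex_vector.subspace_scale[OF subspace_D] resolvent_in_D by metis
qed

lemma resolvent_eq_0_iff: "resolvent E A D l z = 0 \<longleftrightarrow> z = 0"
  using pencil_resolvent[of z] complex_vector_pair.linear_0[OF clinear_resolvent]
  by (auto simp: pencil_def A_0)

lemma bounded_linear_resolvent: "bounded_linear (resolvent E A D l)"
proof -
  obtain K where "\<And>z. norm (resolvent E A D l z) \<le> K * norm z"
    using l by (auto simp: res_set_def)
  then show ?thesis
    by (rule bounded_linear_clinear[OF clinear_resolvent])
qed

end

end

locale linear_pencil_at = linear_pencil E A D
  for E :: "'x::complex_banach \<Rightarrow> 'z::complex_banach" and A D +
  fixes \<mu> :: complex
  assumes \<mu>_regular: "\<mu> \<in> res_set E A D"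
begin

abbreviation R :: "'z \<Rightarrow> 'x" where "R \<equiv> resolvent E A D \<mu>"
abbreviation S :: "'z \<Rightarrow> 'z" where "S \<equiv> R_l E A D \<mu>"
abbreviation T :: "'x \<Rightarrow> 'x" where "T \<equiv> R_r E A D \<mu>"

lemma R_l_apply: "S z = E (R z)"
  by (simp add: R_l_def)

lemma R_r_apply: "T x = R (E x)"
  by (simp add: R_r_def)

sublocale R: Vector_Spaces.linear "(*\<^sub>C)" "(*\<^sub>C)" R
  by (rule clinear_resolvent[OF \<mu>_regular])

lemma clinear_R_l: "clinear S"
  unfolding R_l_def using R.linear_axioms clinear_E by (rule Vector_Spaces.linear_compose)

lemma clinear_R_r: "clinear T"
  unfolding R_r_def using clinear_E R.linear_axioms by (rule Vector_Spaces.linear_compose)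

sublocale S: Vector_Spaces.linear "(*\<^sub>C)" "(*\<^sub>C)" S
  by (rule clinear_R_l)

lemma bounded_linear_R_l: "bounded_linear S"
  using bounded_clinear_E bounded_linear_resolvent[OF \<mu>_regular]
  by (simp add: R_l_def comp_def bounded_clinear_def bounded_linear_compose)

lemma A_resolvent: "A (R w) = \<mu> *\<^sub>C S w - w"
  using pencil_resolvent[OF \<mu>_regular, of w] by (simp add: pencil_def R_l_apply algebra_simps)

lemma resolvent_A: "x \<in> D \<Longrightarrow> R (A x) = \<mu> *\<^sub>C T x - x"
  using resolvent_pencil[OF \<mu>_regular, of x]
  by (simp add: pencil_def R_r_apply R.diff R.scale algebra_simps)

lemma R_r_funpow_resolvent: "(T ^^ k) (R z) = R ((S ^^ k) z)"
  by (induction k) (simp_all add: R_l_apply R_r_apply)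

lemma E_R_r_funpow: "E ((T ^^ k) x) = (S ^^ k) (E x)"
  by (induction k) (simp_all add: R_l_apply R_r_apply)

lemma resolvent_identity:
  assumes l: "l \<in> res_set E A D"
  shows "resolvent E A D l w = R w + (\<mu> - l) *\<^sub>C resolvent E A D l (S w)"
proof -
  let ?Rl = "resolvent E A D l"
  have "pencil E A l (R w) = w + (l - \<mu>) *\<^sub>C S w"
    by (simp add: pencil_def A_resolvent R_l_apply complex_vector.scale_left_diff_distrib)
  then have "R w = ?Rl (w + (l - \<mu>) *\<^sub>C S w)"
    using resolvent_pencil[OF l resolvent_in_D[OF \<mu>_regular]] by metis
  also have "\<dots> = ?Rl w + (l - \<mu>) *\<^sub>C ?Rl (S w)"
    by (simp add: R_l_apply complex_vector_pair.linear_add[OF clinear_resolvent[OF l]]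
        complex_vector_pair.linear_scale[OF clinear_resolvent[OF l]])
  finally show ?thesis
    by (simp add: complex_vector.scale_left_diff_distrib algebra_simps)
qed

lemma resolvent_expansion:
  assumes l: "l \<in> res_set E A D"
  shows "resolvent E A D l z = (\<Sum>k<n. (\<mu> - l) ^ k *\<^sub>C R ((S ^^ k) z))
    + (\<mu> - l) ^ n *\<^sub>C resolvent E A D l ((S ^^ n) z)"
proof (induction n)
  case 0
  then show ?case by simp
next
  case (Suc n)
  have "(\<mu> - l) ^ n *\<^sub>C resolvent E A D l ((S ^^ n) z)
      = (\<mu> - l) ^ n *\<^sub>C R ((S ^^ n) z) + (\<mu> - l) ^ Suc n *\<^sub>C resolvent E A D l ((S ^^ Suc n) z)"
    by (subst resolvent_identity[OF l]) (simp add: scaleC_add_right scaleC_scaleC mult.commute)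
  with Suc.IH show ?case
    by (simp add: add.assoc)
qed

lemma R_l_kernel_stable:
  assumes growth: "res_growth E A D q" and z: "(S ^^ Suc q) z = 0"
  shows "(S ^^ q) z = 0"
proof -
  obtain \<omega> C where halfplane: "{l. Re l > \<omega>} \<subseteq> res_set E A D"
    and bound: "\<And>l z. Re l > \<omega> \<Longrightarrow>
      norm (resolvent E A D l z) \<le> C * cmod l powi (int q - 1) * norm z"
    using growth unfolding res_growth_def by blast
  have "\<forall>\<^sub>F t in at_top.
      norm (\<Sum>k<Suc q. (\<mu> - of_real t) ^ k *\<^sub>C R ((S ^^ k) z)) \<le> (C * norm z) * t powi (int q - 1)"
    using eventually_gt_at_top[of "max \<omega> 0"]
  proof eventually_elim
    case (elim t)
    then have l: "of_real t \<in> res_set E A D"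
      using halfplane by auto
    have "resolvent E A D (of_real t) z = (\<Sum>k<Suc q. (\<mu> - of_real t) ^ k *\<^sub>C R ((S ^^ k) z))"
      using resolvent_expansion[OF l, of z "Suc q"] z
        complex_vector_pair.linear_0[OF clinear_resolvent[OF l]] by simp
    then show ?case
      using bound[of "of_real t" z] elim by (simp add: algebra_simps)
  qed
  then have "R ((S ^^ q) z) = 0"
    by (rule top_coefficient_eq_0_if_slow_growth)
  then show ?thesis
    by (simp add: resolvent_eq_0_iff[OF \<mu>_regular])
qed

lemma A_maps_R_r_kernel:
  assumes growth: "res_growth E A D q" and "x \<in> D" and x: "(T ^^ Suc q) x = 0"
  shows "(S ^^ Suc q) (A x) = 0"
proof -
  interpret Sq: Vector_Spaces.linear "(*\<^sub>C)" "(*\<^sub>C)" "S ^^ q"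
    by (rule clinear_funpow[OF clinear_R_l])
  have E_x: "(S ^^ q) (E x) = 0"
    using R_l_kernel_stable[OF growth] E_R_r_funpow[of "Suc q" x] x by simp
  have "(S ^^ Suc q) (A x) = (S ^^ q) (E (\<mu> *\<^sub>C T x - x))"
    by (simp only: funpow_Suc_right comp_apply R_l_apply resolvent_A[OF \<open>x \<in> D\<close>])
  also have "\<dots> = \<mu> *\<^sub>C E ((T ^^ Suc q) x) - (S ^^ q) (E x)"
    by (simp only: E.diff E.scale Sq.diff Sq.scale E_R_r_funpow funpow_Suc_right comp_apply)
  finally show ?thesis
    using x E_x by simp
qed

lemma E_maps_R_r_kernel: "(T ^^ n) x = 0 \<Longrightarrow> (S ^^ n) (E x) = 0"
  by (simp flip: E_R_r_funpow)

lemma A_kernel_trivial: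
  assumes "w \<in> D" "A w = 0" "(T ^^ n) w = 0"
  shows "w = 0"
proof -
  have w: "w = \<mu> *\<^sub>C T w"
    using resolvent_A[OF \<open>w \<in> D\<close>] \<open>A w = 0\<close> by (simp add: eq_diff_eq)
  have "w = \<mu> ^ k *\<^sub>C (T ^^ k) w" for k
  proof (induction k)
    case 0
    then show ?case by simp
  next
    case (Suc k)
    interpret Tk: Vector_Spaces.linear "(*\<^sub>C)" "(*\<^sub>C)" "T ^^ k"
      by (rule clinear_funpow[OF clinear_R_r])
    have "\<mu> ^ Suc k *\<^sub>C (T ^^ Suc k) w = \<mu> ^ k *\<^sub>C (T ^^ k) (\<mu> *\<^sub>C T w)"
      by (simp only: funpow_Suc_right comp_apply Tk.scale scaleC_scaleC power_Suc2)
    then show ?case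
      using Suc.IH w by simp
  qed
  from this[of n] show ?thesis
    using \<open>(T ^^ n) w = 0\<close> by simp
qed

lemma A_inj_on_R_r_kernel: "inj_on A (D \<inter> {x. (T ^^ n) x = 0})"
proof (rule inj_onI)
  interpret Tn: Vector_Spaces.linear "(*\<^sub>C)" "(*\<^sub>C)" "T ^^ n"
    by (rule clinear_funpow[OF clinear_R_r])
  fix x y
  assume x: "x \<in> D \<inter> {x. (T ^^ n) x = 0}" and y: "y \<in> D \<inter> {x. (T ^^ n) x = 0}"
    and "A x = A y"
  have "x - y \<in> D"
    using x y complex_vector.subspace_diff[OF subspace_D] by blast
  moreover have "A (x - y) = 0"
    using x y \<open>A x = A y\<close> A_diff by simp
  moreover have "(T ^^ n) (x - y) = 0"
    using x y by (simp add: Tn.diff)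
  ultimately have "x - y = 0"
    by (rule A_kernel_trivial)
  then show "x = y"
    by simp
qed

definition kernel_inverse :: "nat \<Rightarrow> 'z \<Rightarrow> 'x" where
  "kernel_inverse n z = - R (\<Sum>k<n. \<mu> ^ k *\<^sub>C (S ^^ k) z)"

lemma kernel_inverse_in_D: "kernel_inverse n z \<in> D"
  unfolding kernel_inverse_def
  by (intro complex_vector.subspace_neg[OF subspace_D] resolvent_in_D[OF \<mu>_regular])

lemma R_r_funpow_kernel_inverse:
  assumes "(S ^^ n) z = 0"
  shows "(T ^^ n) (kernel_inverse n z) = 0"
proof -
  interpret Sn: Vector_Spaces.linear "(*\<^sub>C)" "(*\<^sub>C)" "S ^^ n"
    by (rule clinear_funpow[OF clinear_R_l])
  interpret Tn: Vector_Spaces.linear "(*\<^sub>C)" "(*\<^sub>C)" "T ^^ n"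
    by (rule clinear_funpow[OF clinear_R_r])
  have "(S ^^ n) ((S ^^ k) z) = 0" for k
    using funpow_eq_0_mono[OF clinear_R_l assms, of "n + k"] by (simp add: funpow_add)
  then show ?thesis
    by (simp add: kernel_inverse_def R_r_funpow_resolvent Tn.neg Sn.sum Sn.scale)
qed

lemma A_kernel_inverse: "A (kernel_inverse n z) = z - \<mu> ^ n *\<^sub>C (S ^^ n) z"
proof -
  define g where "g k = \<mu> ^ k *\<^sub>C (S ^^ k) z" for k
  have "\<mu> *\<^sub>C S (\<Sum>k<n. g k) = (\<Sum>k<n. g (Suc k))"
    by (simp add: g_def S.sum S.scale complex_vector.scale_sum_right scaleC_scaleC del: R_l_apply)
  then have "A (kernel_inverse n z) = (\<Sum>k<n. g k - g (Suc k))"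
    using A_diff[of 0 "R (\<Sum>k<n. g k)"] A_0 complex_vector.subspace_0[OF subspace_D]
      resolvent_in_D[OF \<mu>_regular]
    by (simp add: kernel_inverse_def g_def[symmetric] A_resolvent sum_subtractf)
  also have "\<dots> = z - \<mu> ^ n *\<^sub>C (S ^^ n) z"
    unfolding sum_lessThan_telescope' by (simp add: g_def)
  finally show ?thesis .
qed

lemma bounded_linear_kernel_inverse: "bounded_linear (kernel_inverse n)"
  unfolding kernel_inverse_def[abs_def]
  by (intro bounded_linear_minus bounded_linear_compose[OF bounded_linear_resolvent[OF \<mu>_regular]]
      bounded_linear_sum bounded_linear_compose[OF bounded_linear_scaleC_right]
      bounded_linear_funpow bounded_linear_R_l)

lemma E_kernel_inverse: "E (kernel_inverse n z) = (\<Sum>k<n. (- (\<mu> ^ k)) *\<^sub>C (S ^^ Suc k) z)"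
  by (simp add: kernel_inverse_def E.neg R.sum R.scale E.sum E.scale R_l_apply
      complex_vector.scale_minus_left sum_negf)

lemma kernel_inverse_E: "kernel_inverse n (E x) = (\<Sum>k<n. (- (\<mu> ^ k)) *\<^sub>C (T ^^ Suc k) x)"
  by (simp add: kernel_inverse_def R.sum R.scale R_r_funpow_resolvent E_R_r_funpow
      complex_vector.scale_minus_left sum_negf funpow_Suc_right R_r_apply del: funpow.simps)

lemma bij_betw_A_R_r_kernel:
  assumes growth: "res_growth E A D q"
  shows "bij_betw A (D \<inter> {x. (T ^^ Suc q) x = 0}) {z. (S ^^ Suc q) z = 0}"
proof -
  have "{z. (S ^^ n) z = 0} \<subseteq> A ` (D \<inter> {x. (T ^^ n) x = 0})" for n
    using kernel_inverse_in_D R_r_funpow_kernel_inverse A_kernel_inverse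
    by (auto intro!: image_eqI[of _ A "kernel_inverse n _"])
  then show ?thesis
    unfolding bij_betw_def using A_inj_on_R_r_kernel A_maps_R_r_kernel[OF growth] by blast
qed

lemma the_inv_into_A_R_r_kernel:
  assumes "(S ^^ n) z = 0"
  shows "the_inv_into (D \<inter> {x. (T ^^ n) x = 0}) A z = kernel_inverse n z"
  using assms A_inj_on_R_r_kernel kernel_inverse_in_D R_r_funpow_kernel_inverse A_kernel_inverse
  by (simp add: the_inv_into_f_eq)

end

theorem lemma3p1:
  fixes E :: "'x::complex_banach \<Rightarrow> 'z::complex_banach"
    and A :: "'x \<Rightarrow> 'z"
    and D :: "'x set"
    and \<mu> :: complex
  assumes E: "bounded_clinear E"
    and A: "closed_operator D A"
    and dense: "densely_defined D"
    and idx: "has_complex_resolvent_index E A D"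
    and mu: "\<mu> \<in> res_set E A D"
  defines "p \<equiv> complex_resolvent_index E A D + 1"
  defines "Xker \<equiv> {x. (R_r E A D \<mu> ^^ p) x = 0}"
  defines "Zker \<equiv> {z. (R_l E A D \<mu> ^^ p) z = 0}"
  defines "Akinv \<equiv> the_inv_into (D \<inter> Xker) A"
  shows "(\<forall>x \<in> D \<inter> Xker. A x \<in> Zker)
    \<and> bij_betw A (D \<inter> Xker) Zker
    \<and> (\<exists>K. \<forall>z \<in> Zker. norm (Akinv z) \<le> K * norm z)
    \<and> (\<forall>x \<in> Xker. E x \<in> Zker)
    \<and> (\<forall>z \<in> Zker. ((E \<circ> Akinv) ^^ p) z = 0)
    \<and> (\<forall>x \<in> Xker. ((Akinv \<circ> E) ^^ p) x = 0)"
proof -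
  interpret linear_pencil_at E A D \<mu>
    using E A mu by unfold_locales
  define q where "q = complex_resolvent_index E A D"
  have growth: "res_growth E A D q"
    using idx unfolding q_def complex_resolvent_index_def has_complex_resolvent_index_def
    by (rule LeastI_ex)
  have p: "p = Suc q"
    by (simp add: p_def q_def)
  have Akinv: "Akinv z = kernel_inverse p z" if "z \<in> Zker" for z
    using that the_inv_into_A_R_r_kernel by (simp add: Akinv_def Xker_def Zker_def)
  have E_into: "\<forall>x \<in> Xker. E x \<in> Zker"
    by (simp add: Xker_def Zker_def E_maps_R_r_kernel)
  have "\<forall>z \<in> Zker. ((E \<circ> Akinv) ^^ p) z = 0"
    using nilpotent_on_funpow_kernel[OF clinear_R_l, of p "E \<circ> Akinv" "\<lambda>k. - (\<mu> ^ k)"]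
    by (simp add: Zker_def Akinv E_kernel_inverse)
  moreover have "\<forall>x \<in> Xker. ((Akinv \<circ> E) ^^ p) x = 0"
    using nilpotent_on_funpow_kernel[OF clinear_R_r, of p "Akinv \<circ> E" "\<lambda>k. - (\<mu> ^ k)"] E_into
    by (simp add: Xker_def Akinv kernel_inverse_E)
  moreover have "\<exists>K. \<forall>z \<in> Zker. norm (Akinv z) \<le> K * norm z"
    using bounded_linear.bounded[OF bounded_linear_kernel_inverse] Akinv by (metis mult.commute)
  ultimately show ?thesis
    using A_maps_R_r_kernel[OF growth] bij_betw_A_R_r_kernel[OF growth] E_into
    by (simp add: Xker_def Zker_def p)
qed

end
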